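(* Let $A=(a_{ij})\in F$. Then $a_{22}=a_{11}'$ and $a_{21}=a_{12}'$, where $'$ denotes the automorphism of $K[X;Y]$ defined below.
   Context: $K$ is an infinite field of characteristic different from 2. Let $X=\{x_1,x_2,x_1',x_2'\}$ and $Y=\{y_1,y_2,y_1',y_2'\}$, and let $K[X;Y]\cong K[X]\otimes_K E(Y)$ be the free supercommutative algebra: the $x$'s are even commuting variables, the $y$'s are odd pairwise anticommuting variables, and $E(Y)$ is the Grassmann algebra on the vector space with basis $Y$. Put $C_1=\begin{pmatrix} x_1&y_1\\ y_1'&x_1'\end{pmatrix}$, $C_2=\begin{pmatrix} x_2&y_2\\ y_2'&x_2'\end{pmatrix}$, and let $F=K[C_1,C_2]$ be the unital $K$-subalgebra of $M_2(K[X;Y])$ generated by $C_1,C_2$. The map $'$ is the algebra automorphism of $K[X;Y]$ (of order two) given by $x_i\mapsto x_i'$, $x_i'\mapsto x_i$, $y_i\mapsto y_i'$, $y_i'\mapsto y_i$ for $i=1,2$. *)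

theory Defs
  imports Main
begin

text \<open>Index set for the variables: I1, I2, I1', I2' stand for the subscripts 1, 2, 1', 2'.
  The even variables are x_i and the odd variables are y_i for i in this index type.\<close>
datatype idx = I1 | I2 | I1' | I2'

text \<open>Fixed linear order on the odd variables (y1 < y2 < y1' < y2') used for the
  standard basis of the Grassmann algebra.\<close>
fun rank :: "idx \<Rightarrow> nat" where
  "rank I1 = 0" | "rank I2 = 1" | "rank I1' = 2" | "rank I2' = 3"

text \<open>A monomial x^e y_S: exponent vector of the even variables and the (ordered,
  increasing) set of odd variables occurring.\<close>
type_synonym mono = "(idx \<Rightarrow> nat) \<times> idx set"

text \<open>Elements of K[X;Y] = K[X] \<otimes> E(Y): coefficient functions on monomials
  (finitely supported ones, see sa_carrier).\<close>
type_synonym 'k sa = "mono \<Rightarrow> 'k"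

definition sa_carrier :: "('k::zero) sa set" where
  "sa_carrier = {f. finite {m. f m \<noteq> 0}}"

text \<open>Number of transpositions needed to bring y_S y_T (S, T disjoint) into increasing order.\<close>
definition inv_cnt :: "idx set \<Rightarrow> idx set \<Rightarrow> nat" where
  "inv_cnt S T = card {(a, b). a \<in> S \<and> b \<in> T \<and> rank b < rank a}"

definition sa_zero :: "('k::zero) sa" where
  "sa_zero = (\<lambda>m. 0)"

definition sa_one :: "('k::{zero,one}) sa" where
  "sa_one = (\<lambda>m. if m = ((\<lambda>_. 0), {}) then 1 else 0)"

definition sa_add :: "('k::plus) sa \<Rightarrow> 'k sa \<Rightarrow> 'k sa" where
  "sa_add f g = (\<lambda>m. f m + g m)"

definition sa_smult :: "'k::times \<Rightarrow> 'k sa \<Rightarrow> 'k sa" where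
  "sa_smult c f = (\<lambda>m. c * f m)"

text \<open>Supercommutative multiplication: x^e1 y_S1 * x^e2 y_S2 = sign * x^(e1+e2) y_(S1 \<union> S2)
  if S1, S2 are disjoint, and 0 otherwise.\<close>
definition sa_mult :: "('k::comm_ring_1) sa \<Rightarrow> 'k sa \<Rightarrow> 'k sa" where
  "sa_mult f g = (\<lambda>(e, S).
     \<Sum>e1\<in>{d. \<forall>i. d i \<le> e i}. \<Sum>S1\<in>Pow S.
        (-1) ^ inv_cnt S1 (S - S1) * f (e1, S1) * g (\<lambda>i. e i - e1 i, S - S1))"

definition sa_x :: "idx \<Rightarrow> ('k::{zero,one}) sa" where
  "sa_x i = (\<lambda>m. if m = ((\<lambda>j. if j = i then 1 else 0), {}) then 1 else 0)"

definition sa_y :: "idx \<Rightarrow> ('k::{zero,one}) sa" where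
  "sa_y i = (\<lambda>m. if m = ((\<lambda>_. 0), {i}) then 1 else 0)"

fun swap :: "idx \<Rightarrow> idx" where
  "swap I1 = I1'" | "swap I1' = I1" | "swap I2 = I2'" | "swap I2' = I2"

text \<open>The algebra automorphism ' of K[X;Y] with x_i \<mapsto> x_i', x_i' \<mapsto> x_i,
  y_i \<mapsto> y_i', y_i' \<mapsto> y_i, written out on the monomial basis:
  x^e y_S \<mapsto> (-1)^(inversions of swap on S) x^(e \<circ> swap) y_(swap ` S).\<close>
definition sa_prime :: "('k::comm_ring_1) sa \<Rightarrow> 'k sa" where
  "sa_prime f = (\<lambda>(e, S).
     (-1) ^ card {(a, b). a \<in> S \<and> b \<in> S \<and> rank a < rank b \<and> rank (swap b) < rank (swap a)}
     * f (e \<circ> swap, swap ` S))"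

datatype 'a mat2 = Mat2 (m11: 'a) (m12: 'a) (m21: 'a) (m22: 'a)

definition mat2_add :: "('k::comm_ring_1) sa mat2 \<Rightarrow> 'k sa mat2 \<Rightarrow> 'k sa mat2" where
  "mat2_add A B = Mat2 (sa_add (m11 A) (m11 B)) (sa_add (m12 A) (m12 B))
                       (sa_add (m21 A) (m21 B)) (sa_add (m22 A) (m22 B))"

definition mat2_mult :: "('k::comm_ring_1) sa mat2 \<Rightarrow> 'k sa mat2 \<Rightarrow> 'k sa mat2" where
  "mat2_mult A B = Mat2
     (sa_add (sa_mult (m11 A) (m11 B)) (sa_mult (m12 A) (m21 B)))
     (sa_add (sa_mult (m11 A) (m12 B)) (sa_mult (m12 A) (m22 B)))
     (sa_add (sa_mult (m21 A) (m11 B)) (sa_mult (m22 A) (m21 B)))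
     (sa_add (sa_mult (m21 A) (m12 B)) (sa_mult (m22 A) (m22 B)))"

definition mat2_smult :: "'k::comm_ring_1 \<Rightarrow> 'k sa mat2 \<Rightarrow> 'k sa mat2" where
  "mat2_smult c A = Mat2 (sa_smult c (m11 A)) (sa_smult c (m12 A))
                         (sa_smult c (m21 A)) (sa_smult c (m22 A))"

definition C1 :: "('k::comm_ring_1) sa mat2" where
  "C1 = Mat2 (sa_x I1) (sa_y I1) (sa_y I1') (sa_x I1')"

definition C2 :: "('k::comm_ring_1) sa mat2" where
  "C2 = Mat2 (sa_x I2) (sa_y I2) (sa_y I2') (sa_x I2')"

inductive_set F_alg :: "('k::comm_ring_1) sa mat2 set" where
  scalar: "Mat2 (sa_smult c sa_one) sa_zero sa_zero (sa_smult c sa_one) \<in> F_alg"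
| gen1: "C1 \<in> F_alg"
| gen2: "C2 \<in> F_alg"
| add: "A \<in> F_alg \<Longrightarrow> B \<in> F_alg \<Longrightarrow> mat2_add A B \<in> F_alg"
| mult: "A \<in> F_alg \<Longrightarrow> B \<in> F_alg \<Longrightarrow> mat2_mult A B \<in> F_alg"
| smult: "A \<in> F_alg \<Longrightarrow> mat2_smult c A \<in> F_alg"

end

theory Submission imports Defs begin

text \<open>The map \<open>'\<close> is an involutive algebra automorphism of K[X;Y], so the matrices
  with \<open>a\<^sub>2\<^sub>2 = a\<^sub>1\<^sub>1'\<close> and \<open>a\<^sub>2\<^sub>1 = a\<^sub>1\<^sub>2'\<close> form a subalgebra of M_2(K[X;Y]):
  for a product, \<open>(AB)\<^sub>2\<^sub>2 = a\<^sub>2\<^sub>1 b\<^sub>1\<^sub>2 + a\<^sub>2\<^sub>2 b\<^sub>2\<^sub>2 = a\<^sub>1\<^sub>2' b\<^sub>2\<^sub>1' + a\<^sub>1\<^sub>1' b\<^sub>1\<^sub>1' = (AB)\<^sub>1\<^sub>1'\<close>, and similarly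
  for \<open>(AB)\<^sub>2\<^sub>1\<close>. It contains the scalars and the generators C1, C2, hence all of F.
  The only real work is checking that \<open>'\<close>, written out on the monomial basis with its
  sign, is multiplicative for the supercommutative product.\<close>

lemma swap_swap [simp]: "swap (swap i) = i"
  by (cases i) auto

lemma bij_swap: "bij swap"
  by (rule involuntory_imp_bij) (rule swap_swap)

lemma inj_swap: "inj swap"
  using bij_swap by (rule bij_is_inj)

lemma mem_swap_image_iff [simp]: "x \<in> swap ` S \<longleftrightarrow> swap x \<in> S"
  by (metis image_iff swap_swap)

lemma swap_image_swap_image [simp]: "swap ` swap ` S = S"
  by auto

lemma comp_swap_eq_iff: "e \<circ> swap = d \<longleftrightarrow> e = d \<circ> swap"
  by (auto simp: fun_eq_iff) (metis swap_swap)+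

lemma swap_image_eq_iff: "swap ` S = T \<longleftrightarrow> S = swap ` T"
  by auto

definition swap_inversions :: "idx set \<Rightarrow> nat" where
  "swap_inversions S =
     card {(a, b). a \<in> S \<and> b \<in> S \<and> rank a < rank b \<and> rank (swap b) < rank (swap a)}"

lemma sa_prime_apply: "sa_prime f (e, S) = (-1) ^ swap_inversions S * f (e \<circ> swap, swap ` S)"
  unfolding sa_prime_def swap_inversions_def by (simp only: case_prod_conv)

text \<open>The reversed pairs of \<open>swap ` S\<close> are the images of those of \<open>S\<close> under
  \<open>(a, b) \<mapsto> (swap b, swap a)\<close>.\<close>
lemma swap_inversions_swap_image: "swap_inversions (swap ` S) = swap_inversions S"
  unfolding swap_inversions_def
  by (rule bij_betw_same_card[where f = "\<lambda>(a, b). (swap b, swap a)"],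
      rule bij_betw_byWitness[where f' = "\<lambda>(a, b). (swap b, swap a)"]) auto

definition idx_list :: "idx list" where
  "idx_list = [I1, I2, I1', I2']"

lemma set_idx_list: "set idx_list = UNIV"
proof -
  have "i \<in> set idx_list" for i
    by (cases i) (simp_all add: idx_list_def)
  then show ?thesis
    by blast
qed

lemma finite_idx: "finite (UNIV :: idx set)"
  by (metis List.finite_set set_idx_list)

lemma swap_inversions_le_one:
  assumes "card S \<le> 1"
  shows "swap_inversions S = 0"
proof -
  have "finite S"
    using finite_subset[OF subset_UNIV finite_idx] .
  then have "\<forall>a \<in> S. \<forall>b \<in> S. a = b"
    using assms card_le_Suc0_iff_eq by auto
  then have "{(a, b). a \<in> S \<and> b \<in> S \<and> rank a < rank b \<and> rank (swap b) < rank (swap a)} = {}"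
    by auto
  then show ?thesis
    unfolding swap_inversions_def by (simp only: card.empty)
qed

definition count_pairs :: "(idx \<Rightarrow> idx \<Rightarrow> bool) \<Rightarrow> nat" where
  "count_pairs P = length (filter (\<lambda>(a, b). P a b) (List.product idx_list idx_list))"

lemma card_pairs_eq_count_pairs: "card {(a, b). P a b} = count_pairs P"
proof -
  let ?ps = "filter (\<lambda>(a, b). P a b) (List.product idx_list idx_list)"
  have "set (List.product idx_list idx_list) = UNIV"
    by (simp add: set_idx_list)
  then have "{(a, b). P a b} = set ?ps"
    unfolding set_filter by simp
  moreover have "distinct ?ps"
    by (intro distinct_filter distinct_product) (simp_all add: idx_list_def)
  ultimately show ?thesis
    unfolding count_pairs_def by (simp only: distinct_card)
qed

text \<open>Sign bookkeeping for \<open>y\<^sub>S = \<pm> y\<^sub>S\<^sub>1 y\<^sub>S\<^sub>-\<^sub>S\<^sub>1\<close> before and after applying \<open>'\<close>; there are only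
  81 pairs \<open>S1 \<subseteq> S\<close> of index sets, so it is checked by evaluation.\<close>
lemma swap_inversions_split_parity:
  assumes "S1 \<subseteq> S"
  shows "even (swap_inversions S + inv_cnt (swap ` S1) (swap ` S - swap ` S1))
     \<longleftrightarrow> even (inv_cnt S1 (S - S1) + swap_inversions S1 + swap_inversions (S - S1))"
proof -
  have check: "\<forall>ys \<in> set (subseqs idx_list). \<forall>zs \<in> set (subseqs ys).
      let S = set ys; S1 = set zs in
      even (swap_inversions S + inv_cnt (swap ` S1) (swap ` S - swap ` S1))
      \<longleftrightarrow> even (inv_cnt S1 (S - S1) + swap_inversions S1 + swap_inversions (S - S1))"
    unfolding swap_inversions_def inv_cnt_def card_pairs_eq_count_pairs count_pairs_def idx_list_def
    by code_simp
  have "S \<in> set ` set (subseqs idx_list)"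
    by (simp add: subseqs_powset set_idx_list)
  then obtain ys where ys: "ys \<in> set (subseqs idx_list)" "S = set ys"
    by blast
  have "S1 \<in> set ` set (subseqs ys)"
    using assms by (simp add: subseqs_powset ys(2))
  then obtain zs where zs: "zs \<in> set (subseqs ys)" "S1 = set zs"
    by blast
  show ?thesis
    using bspec[OF bspec[OF check ys(1)] zs(1)] by (simp only: Let_def ys(2) zs(2))
qed

lemma swap_sign_split:
  assumes "S1 \<subseteq> S"
  shows "(-1::'a::comm_ring_1) ^ swap_inversions S * (-1) ^ inv_cnt (swap ` S1) (swap ` S - swap ` S1)
     = (-1) ^ inv_cnt S1 (S - S1) * (-1) ^ swap_inversions S1 * (-1) ^ swap_inversions (S - S1)"
proof -
  have "(-1::'a) ^ (swap_inversions S + inv_cnt (swap ` S1) (swap ` S - swap ` S1))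
      = (-1) ^ (inv_cnt S1 (S - S1) + swap_inversions S1 + swap_inversions (S - S1))"
    by (simp only: minus_one_power_iff swap_inversions_split_parity[OF assms])
  then show ?thesis
    by (simp add: power_add)
qed

lemma sa_eqI: "(\<And>e S. f (e, S) = g (e, S)) \<Longrightarrow> f = g"
  by (rule ext) (metis surj_pair)

lemma sa_prime_involutive: "sa_prime (sa_prime f) = f"
proof (rule sa_eqI)
  fix e :: "idx \<Rightarrow> nat" and S :: "idx set"
  have "e \<circ> swap \<circ> swap = e"
    by (auto simp: fun_eq_iff)
  then show "sa_prime (sa_prime f) (e, S) = f (e, S)"
    by (simp add: sa_prime_apply swap_inversions_swap_image flip: power_add)
qed

lemma sa_prime_add: "sa_prime (sa_add f g) = sa_add (sa_prime f) (sa_prime g)"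
  by (rule sa_eqI) (simp add: sa_prime_apply sa_add_def distrib_left)

lemma sa_prime_smult: "sa_prime (sa_smult c f) = sa_smult c (sa_prime f)"
  by (rule sa_eqI) (simp add: sa_prime_apply sa_smult_def mult.left_commute)

lemma sa_prime_zero: "sa_prime sa_zero = sa_zero"
  by (rule sa_eqI) (simp add: sa_prime_apply sa_zero_def)

lemma sa_prime_monomial:
  assumes "card T \<le> 1"
  shows "sa_prime (\<lambda>m. if m = (d, T) then 1 else 0)
       = (\<lambda>m. if m = (d \<circ> swap, swap ` T) then 1 else 0)"
proof (rule sa_eqI)
  fix e :: "idx \<Rightarrow> nat" and S :: "idx set"
  have "(e \<circ> swap, swap ` S) = (d, T) \<longleftrightarrow> (e, S) = (d \<circ> swap, swap ` T)"
    by (simp add: comp_swap_eq_iff swap_image_eq_iff)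
  moreover have "swap_inversions (swap ` T) = 0"
    using assms card_image_le[OF finite_subset[OF subset_UNIV finite_idx], of swap T]
    by (intro swap_inversions_le_one) simp
  ultimately show "sa_prime (\<lambda>m. if m = (d, T) then 1 else 0) (e, S)
      = (if (e, S) = (d \<circ> swap, swap ` T) then 1 else 0)"
    by (auto simp: sa_prime_apply)
qed

lemma sa_prime_one: "sa_prime sa_one = sa_one"
  using sa_prime_monomial[of "{}" "\<lambda>_. 0"] by (simp add: sa_one_def comp_def)

lemma sa_prime_x: "sa_prime (sa_x i) = sa_x (swap i)"
proof -
  have "(\<lambda>j. if j = i then 1 else 0::nat) \<circ> swap = (\<lambda>j. if j = swap i then 1 else 0)"
    by (auto simp: fun_eq_iff)
  then show ?thesis
    using sa_prime_monomial[of "{}" "\<lambda>j. if j = i then 1 else 0"] by (simp add: sa_x_def)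
qed

lemma sa_prime_y: "sa_prime (sa_y i) = sa_y (swap i)"
  using sa_prime_monomial[of "{i}" "\<lambda>_. 0"] by (simp add: sa_y_def comp_def)

lemma sa_mult_apply:
  "sa_mult f g (e, S) = (\<Sum>e1 \<in> {d. \<forall>i. d i \<le> e i}. \<Sum>S1 \<in> Pow S.
     (-1) ^ inv_cnt S1 (S - S1) * f (e1, S1) * g (\<lambda>i. e i - e1 i, S - S1))"
  unfolding sa_mult_def by simp

lemma sum_exponents_below_comp_bij:
  assumes "bij \<sigma>"
  shows "(\<Sum>d \<in> {d. \<forall>i. d i \<le> e (\<sigma> i)}. h d) = (\<Sum>d \<in> {d. \<forall>i. d i \<le> e i}. h (d \<circ> \<sigma>))"
proof -
  have \<sigma>_inv: "\<sigma> (inv \<sigma> y) = y" "inv \<sigma> (\<sigma> x) = x" for x y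
    using assms by (simp_all add: bij_is_inj bij_is_surj surj_f_inv_f)
  have below_inv: "d (inv \<sigma> i) \<le> e i" if "\<forall>i. d i \<le> e (\<sigma> i)" for d i
    by (metis that \<sigma>_inv(1))
  have "bij_betw (\<lambda>d. d \<circ> \<sigma>) {d. \<forall>i. d i \<le> e i} {d. \<forall>i. d i \<le> e (\<sigma> i)}"
    by (rule bij_betw_byWitness[where f' = "\<lambda>d. d \<circ> inv \<sigma>"])
      (auto simp: fun_eq_iff \<sigma>_inv below_inv)
  then show ?thesis
    by (rule sum.reindex_bij_betw[symmetric])
qed

lemma sum_Pow_image_inj:
  assumes "inj \<sigma>"
  shows "(\<Sum>T \<in> Pow (\<sigma> ` S). h T) = (\<Sum>T \<in> Pow S. h (\<sigma> ` T))"
proof -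
  have "Pow (\<sigma> ` S) = image \<sigma> ` Pow S"
    by (simp add: image_Pow_surj)
  then show ?thesis
    by (simp add: sum.reindex[OF inj_on_image_Pow[OF inj_on_subset[OF assms]]])
qed

lemma sa_prime_mult:
  fixes f g :: "'a::comm_ring_1 sa"
  shows "sa_prime (sa_mult f g) = sa_mult (sa_prime f) (sa_prime g)"
proof (rule sa_eqI)
  fix e :: "idx \<Rightarrow> nat" and S :: "idx set"
  let ?sgn = "\<lambda>S. (-1::'a) ^ swap_inversions S"
  have "sa_prime (sa_mult f g) (e, S) = ?sgn S * (\<Sum>d \<in> {d. \<forall>i. d i \<le> e i}. \<Sum>T \<in> Pow S.
      (-1) ^ inv_cnt (swap ` T) (swap ` S - swap ` T)
        * f (d \<circ> swap, swap ` T) * g ((\<lambda>i. e i - d i) \<circ> swap, swap ` S - swap ` T))"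
    by (simp add: sa_prime_apply sa_mult_apply sum_exponents_below_comp_bij[OF bij_swap]
        sum_Pow_image_inj[OF inj_swap] comp_def)
  also have "\<dots> = (\<Sum>d \<in> {d. \<forall>i. d i \<le> e i}. \<Sum>T \<in> Pow S. (-1) ^ inv_cnt T (S - T)
      * (?sgn T * f (d \<circ> swap, swap ` T)) * (?sgn (S - T) * g ((\<lambda>i. e i - d i) \<circ> swap, swap ` (S - T))))"
    unfolding sum_distrib_left image_set_diff[OF inj_swap]
  proof (intro sum.cong refl)
    fix d T assume "T \<in> Pow S"
    let ?F = "f (d \<circ> swap, swap ` T)" and ?G = "g ((\<lambda>i. e i - d i) \<circ> swap, swap ` S - swap ` T)"
    have "?sgn S * ((-1) ^ inv_cnt (swap ` T) (swap ` S - swap ` T) * ?F * ?G)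
        = (?sgn S * (-1) ^ inv_cnt (swap ` T) (swap ` S - swap ` T)) * ?F * ?G"
      by (simp only: mult.assoc)
    also have "\<dots> = ((-1) ^ inv_cnt T (S - T) * ?sgn T * ?sgn (S - T)) * ?F * ?G"
      using \<open>T \<in> Pow S\<close> by (simp only: swap_sign_split Pow_iff)
    also have "\<dots> = (-1) ^ inv_cnt T (S - T) * (?sgn T * ?F) * (?sgn (S - T) * ?G)"
      by (simp only: ac_simps)
    finally show "?sgn S * ((-1) ^ inv_cnt (swap ` T) (swap ` S - swap ` T) * ?F * ?G)
        = (-1) ^ inv_cnt T (S - T) * (?sgn T * ?F) * (?sgn (S - T) * ?G)" .
  qed
  also have "\<dots> = sa_mult (sa_prime f) (sa_prime g) (e, S)"
    by (simp add: sa_mult_apply sa_prime_apply comp_def)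
  finally show "sa_prime (sa_mult f g) (e, S) = sa_mult (sa_prime f) (sa_prime g) (e, S)" .
qed

definition prime_symmetric :: "('k::comm_ring_1) sa mat2 \<Rightarrow> bool" where
  "prime_symmetric A \<longleftrightarrow> m22 A = sa_prime (m11 A) \<and> m21 A = sa_prime (m12 A)"

lemma prime_symmetric_scalar:
  "prime_symmetric (Mat2 (sa_smult c sa_one) sa_zero sa_zero (sa_smult c sa_one))"
  by (simp add: prime_symmetric_def sa_prime_smult sa_prime_one sa_prime_zero)

lemma prime_symmetric_C1: "prime_symmetric C1"
  by (simp add: prime_symmetric_def C1_def sa_prime_x sa_prime_y)

lemma prime_symmetric_C2: "prime_symmetric C2"
  by (simp add: prime_symmetric_def C2_def sa_prime_x sa_prime_y)

lemma prime_symmetric_add: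
  "prime_symmetric A \<Longrightarrow> prime_symmetric B \<Longrightarrow> prime_symmetric (mat2_add A B)"
  by (simp add: prime_symmetric_def mat2_add_def sa_prime_add)

lemma prime_symmetric_smult: "prime_symmetric A \<Longrightarrow> prime_symmetric (mat2_smult c A)"
  by (simp add: prime_symmetric_def mat2_smult_def sa_prime_smult)

lemma sa_add_commute: "sa_add (f :: 'k::ab_semigroup_add sa) g = sa_add g f"
  unfolding sa_add_def by (simp add: add.commute)

lemma prime_symmetric_mult:
  assumes "prime_symmetric A" and "prime_symmetric B"
  shows "prime_symmetric (mat2_mult A B)"
proof -
  obtain a b where "A = Mat2 a b (sa_prime b) (sa_prime a)"
    using assms(1) by (metis mat2.collapse prime_symmetric_def)
  moreover obtain c d where "B = Mat2 c d (sa_prime d) (sa_prime c)"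
    using assms(2) by (metis mat2.collapse prime_symmetric_def)
  ultimately show ?thesis
    by (simp add: prime_symmetric_def mat2_mult_def sa_prime_add sa_prime_mult
        sa_prime_involutive sa_add_commute)
qed

theorem lemma4:
  fixes A :: "('k::field) sa mat2"
  assumes "infinite (UNIV :: 'k set)"
    and "(2::'k) \<noteq> 0"
    and "A \<in> F_alg"
  shows "m22 A = sa_prime (m11 A) \<and> m21 A = sa_prime (m12 A)"
proof -
  from \<open>A \<in> F_alg\<close> have "prime_symmetric A"
    by induction
      (auto intro: prime_symmetric_scalar prime_symmetric_C1 prime_symmetric_C2
        prime_symmetric_add prime_symmetric_mult prime_symmetric_smult)
  then show ?thesis
    unfolding prime_symmetric_def .
qed

end
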